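(* Let $A,B,C$ be the observed variables of the Triangle scenario, each taking values in $\{-1,+1\}$. For every distribution $P_{ABC}$ compatible with the Triangle scenario (latent variables of arbitrary cardinality), $$\langle AC\rangle+\langle BC\rangle\le 1+\langle A\rangle\langle B\rangle,$$ where $\langle\cdot\rangle$ denotes expectation under $P_{ABC}$.
   Context: The Triangle scenario is the causal structure with observed nodes $A,B,C$, latent nodes $X,Y,Z$ and edges $X\to A$, $X\to B$, $Y\to A$, $Y\to C$, $Z\to B$, $Z\to C$ (each pair of observed variables shares exactly one latent parent, and observed variables have no other parents). A distribution $P_{ABC}$ is compatible with it if there exist distributions $P_X,P_Y,P_Z$ and conditionals $P_{A|XY},P_{B|XZ},P_{C|YZ}$ such that $P_{ABC}$ is the marginal of $P_XP_YP_ZP_{A|XY}P_{B|XZ}P_{C|YZ}$. *)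

theory Defs
  imports "HOL-Probability.Probability"
begin

definition pm1 :: "int set" where
  "pm1 = {-1, 1}"

definition binary_conditional ::
  "'u measure \<Rightarrow> 'v measure \<Rightarrow> ('u \<Rightarrow> 'v \<Rightarrow> int \<Rightarrow> real) \<Rightarrow> bool" where
  "binary_conditional M1 M2 q \<longleftrightarrow>
     (\<forall>a\<in>pm1. (\<lambda>(u,v). q u v a) \<in> borel_measurable (M1 \<Otimes>\<^sub>M M2)) \<and>
     (\<forall>u\<in>space M1. \<forall>v\<in>space M2. (\<forall>a\<in>pm1. 0 \<le> q u v a) \<and> (\<Sum>a\<in>pm1. q u v a) = 1)"

text \<open>The observed distribution P_ABC generated by the Triangle network with latent
  sources X ~ MX, Y ~ MY, Z ~ MZ (independent) and conditionals
  P_{A|XY} = qA, P_{B|XZ} = qB, P_{C|YZ} = qC.\<close>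
definition triangle_distribution ::
  "'x measure \<Rightarrow> 'y measure \<Rightarrow> 'z measure \<Rightarrow>
   ('x \<Rightarrow> 'y \<Rightarrow> int \<Rightarrow> real) \<Rightarrow> ('x \<Rightarrow> 'z \<Rightarrow> int \<Rightarrow> real) \<Rightarrow>
   ('y \<Rightarrow> 'z \<Rightarrow> int \<Rightarrow> real) \<Rightarrow> int \<Rightarrow> int \<Rightarrow> int \<Rightarrow> real" where
  "triangle_distribution MX MY MZ qA qB qC a b c =
     (\<integral>w. qA (fst w) (fst (snd w)) a * qB (fst w) (snd (snd w)) b * qC (fst (snd w)) (snd (snd w)) c
        \<partial>(MX \<Otimes>\<^sub>M (MY \<Otimes>\<^sub>M MZ)))"

definition expect3 :: "(int \<Rightarrow> int \<Rightarrow> int \<Rightarrow> real) \<Rightarrow> (int \<Rightarrow> int \<Rightarrow> int \<Rightarrow> real) \<Rightarrow> real" where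
  "expect3 P f = (\<Sum>a\<in>pm1. \<Sum>b\<in>pm1. \<Sum>c\<in>pm1. f a b c * P a b c)"

end

theory Submission
  imports Defs
begin

text \<open>Write \<alpha>(x,y), \<beta>(x,z), \<gamma>(y,z) \<in> [-1,1] for the conditional means of A, B, C given their
  sources. Then \<langle>AC\<rangle> + \<langle>BC\<rangle> = E[(\<alpha> + \<beta>) \<gamma>], and averaging over X first gives
  E_{Y,Z}[(a(Y) + b(Z)) \<gamma>(Y,Z)] with a = E_X \<alpha> and b = E_X \<beta>. Pointwise
  (a + b) c \<le> 1 + a b whenever |a|, |b|, |c| \<le> 1, and since Y and Z are independent,
  E[1 + a(Y) b(Z)] = 1 + E a \<cdot> E b = 1 + \<langle>A\<rangle>\<langle>B\<rangle>.\<close>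

lemma sum_pm1: "(\<Sum>a\<in>pm1. f a) = f (-1) + (f 1 :: 'a :: comm_monoid_add)"
  by (simp add: pm1_def)

lemma correlation_bound:
  fixes u v c :: real
  assumes "\<bar>u\<bar> \<le> 1" "\<bar>v\<bar> \<le> 1" "\<bar>c\<bar> \<le> 1"
  shows "(u + v) * c \<le> 1 + u * v"
proof (cases "u + v \<ge> 0")
  case True
  have "(u + v) * c \<le> (u + v) * 1"
    using assms(3) True by (intro mult_left_mono) auto
  moreover have "0 \<le> (1 - u) * (1 - v)" using assms by auto
  ultimately show ?thesis by (simp add: algebra_simps)
next
  case False
  have "(u + v) * c \<le> (u + v) * (-1)"
    using assms(3) False by (intro mult_left_mono_neg) auto
  moreover have "0 \<le> (1 + u) * (1 + v)" using assms by auto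
  ultimately show ?thesis by (simp add: algebra_simps)
qed

definition cond_mean :: "('u \<Rightarrow> 'v \<Rightarrow> int \<Rightarrow> real) \<Rightarrow> 'u \<Rightarrow> 'v \<Rightarrow> real" where
  "cond_mean q u v = q u v 1 - q u v (-1)"

lemma
  assumes "binary_conditional M1 M2 q" and "u \<in> space M1" "v \<in> space M2"
  shows binary_conditional_nonneg: "a \<in> pm1 \<Longrightarrow> 0 \<le> q u v a"
    and binary_conditional_normalised: "q u v (-1) + q u v 1 = 1"
  using assms by (auto simp: binary_conditional_def sum_pm1)

lemma abs_binary_conditional_le_1:
  assumes "binary_conditional M1 M2 q" "u \<in> space M1" "v \<in> space M2" "a \<in> pm1"
  shows "\<bar>q u v a\<bar> \<le> 1"
  using binary_conditional_nonneg[OF assms(1-3)] binary_conditional_normalised[OF assms(1-3)] assms(4)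
  by (force simp: pm1_def)

lemma abs_cond_mean_le_1:
  assumes "binary_conditional M1 M2 q" "u \<in> space M1" "v \<in> space M2"
  shows "\<bar>cond_mean q u v\<bar> \<le> 1"
  using binary_conditional_nonneg[OF assms, of 1] binary_conditional_nonneg[OF assms, of "-1"]
    binary_conditional_normalised[OF assms]
  by (auto simp: cond_mean_def pm1_def)

lemma measurable_binary_conditional:
  assumes "binary_conditional M1 M2 q" "a \<in> pm1"
  shows "(\<lambda>(u, v). q u v a) \<in> borel_measurable (M1 \<Otimes>\<^sub>M M2)"
  using assms by (simp add: binary_conditional_def)

lemma measurable_cond_mean:
  assumes "binary_conditional M1 M2 q"
  shows "(\<lambda>(u, v). cond_mean q u v) \<in> borel_measurable (M1 \<Otimes>\<^sub>M M2)"
proof -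
  have "(\<lambda>(u, v). q u v 1) \<in> borel_measurable (M1 \<Otimes>\<^sub>M M2)"
       "(\<lambda>(u, v). q u v (-1)) \<in> borel_measurable (M1 \<Otimes>\<^sub>M M2)"
    using assms by (auto intro: measurable_binary_conditional simp: pm1_def)
  then show ?thesis
    unfolding cond_mean_def by (simp add: case_prod_beta')
qed

lemma expect3_product:
  fixes qa qb qc :: "int \<Rightarrow> real"
  assumes "qa (-1) + qa 1 = 1" "qb (-1) + qb 1 = 1" "qc (-1) + qc 1 = 1"
  defines "P \<equiv> \<lambda>a b c. qa a * qb b * qc c"
  shows "expect3 P (\<lambda>a b c. of_int (a * c)) = (qa 1 - qa (-1)) * (qc 1 - qc (-1))"
    and "expect3 P (\<lambda>a b c. of_int (b * c)) = (qb 1 - qb (-1)) * (qc 1 - qc (-1))"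
    and "expect3 P (\<lambda>a b c. of_int a) = qa 1 - qa (-1)"
    and "expect3 P (\<lambda>a b c. of_int b) = qb 1 - qb (-1)"
  unfolding expect3_def P_def sum_pm1 assms(1-3)[THEN eq_diff_eq[THEN iffD2]]
  by (simp_all add: algebra_simps)

lemma (in prob_space) integrable_abs_bounded:
  fixes f :: "'a \<Rightarrow> real"
  assumes "f \<in> borel_measurable M" "\<And>x. x \<in> space M \<Longrightarrow> \<bar>f x\<bar> \<le> B"
  shows "integrable M f"
  using assms by (intro integrable_const_bound[where B = B] AE_I2) auto

lemma (in prob_space) abs_integral_le_bound:
  fixes f :: "'a \<Rightarrow> real"
  assumes "f \<in> borel_measurable M" "\<And>x. x \<in> space M \<Longrightarrow> \<bar>f x\<bar> \<le> B"
  shows "\<bar>\<integral>x. f x \<partial>M\<bar> \<le> B"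
proof -
  have "integrable M f" by (rule integrable_abs_bounded[OF assms])
  then have "-B \<le> (\<integral>x. f x \<partial>M) \<and> (\<integral>x. f x \<partial>M) \<le> B"
    using assms(2) by (force intro!: integral_ge_const integral_le_const AE_I2 simp: abs_le_iff)
  then show ?thesis by auto
qed

lemma (in pair_prob_space) integral_pair_product:
  fixes f :: "'a \<Rightarrow> real" and g :: "'b \<Rightarrow> real"
  assumes [measurable]: "f \<in> borel_measurable M1" "g \<in> borel_measurable M2"
    and "\<And>x. x \<in> space M1 \<Longrightarrow> \<bar>f x\<bar> \<le> B" "\<And>y. y \<in> space M2 \<Longrightarrow> \<bar>g y\<bar> \<le> C"
  shows "(\<integral>(x, y). f x * g y \<partial>(M1 \<Otimes>\<^sub>M M2)) = integral\<^sup>L M1 f * integral\<^sup>L M2 g"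
proof -
  have "integrable (M1 \<Otimes>\<^sub>M M2) (\<lambda>(x, y). f x * g y)"
  proof (rule integrable_abs_bounded[where B = "B * C"])
    fix p assume "p \<in> space (M1 \<Otimes>\<^sub>M M2)"
    with assms(3,4) show "\<bar>(\<lambda>(x, y). f x * g y) p\<bar> \<le> B * C"
      by (auto simp: space_pair_measure abs_mult intro!: mult_mono')
  qed measurable
  then have "(\<integral>(x, y). f x * g y \<partial>(M1 \<Otimes>\<^sub>M M2)) = (\<integral>x. (\<integral>y. f x * g y \<partial>M2) \<partial>M1)"
    by (rule integral_fst[symmetric])
  then show ?thesis by simp
qed

locale triangle_network =
  X: prob_space MX + Y: prob_space MY + Z: prob_space MZ
  for MX :: "'x measure" and MY :: "'y measure" and MZ :: "'z measure"
    and qA :: "'x \<Rightarrow> 'y \<Rightarrow> int \<Rightarrow> real"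
    and qB :: "'x \<Rightarrow> 'z \<Rightarrow> int \<Rightarrow> real"
    and qC :: "'y \<Rightarrow> 'z \<Rightarrow> int \<Rightarrow> real" +
  assumes conditional_A: "binary_conditional MX MY qA"
    and conditional_B: "binary_conditional MX MZ qB"
    and conditional_C: "binary_conditional MY MZ qC"
begin

sublocale YZ: pair_prob_space MY MZ ..

sublocale XYZ: pair_prob_space MX "MY \<Otimes>\<^sub>M MZ"
  by intro_locales

abbreviation observed :: "int \<Rightarrow> int \<Rightarrow> int \<Rightarrow> real" where
  "observed \<equiv> triangle_distribution MX MY MZ qA qB qC"

lemma integrable_source_product:
  assumes "a \<in> pm1" "b \<in> pm1" "c \<in> pm1"
  shows "integrable (MX \<Otimes>\<^sub>M (MY \<Otimes>\<^sub>M MZ)) (\<lambda>(x, y, z). qA x y a * qB x z b * qC y z c)"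
proof (rule XYZ.integrable_abs_bounded[where B = 1])
  have [measurable]: "(\<lambda>(x, y). qA x y a) \<in> borel_measurable (MX \<Otimes>\<^sub>M MY)"
      "(\<lambda>(x, z). qB x z b) \<in> borel_measurable (MX \<Otimes>\<^sub>M MZ)"
      "(\<lambda>(y, z). qC y z c) \<in> borel_measurable (MY \<Otimes>\<^sub>M MZ)"
    using assms conditional_A conditional_B conditional_C by (simp_all add: measurable_binary_conditional)
  show "(\<lambda>(x, y, z). qA x y a * qB x z b * qC y z c) \<in> borel_measurable (MX \<Otimes>\<^sub>M (MY \<Otimes>\<^sub>M MZ))"
    by measurable
  fix w assume "w \<in> space (MX \<Otimes>\<^sub>M (MY \<Otimes>\<^sub>M MZ))"
  then obtain x y z where "w = (x, y, z)" "x \<in> space MX" "y \<in> space MY" "z \<in> space MZ"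
    by (auto simp: space_pair_measure)
  moreover from this assms have "\<bar>qA x y a\<bar> \<le> 1" "\<bar>qB x z b\<bar> \<le> 1" "\<bar>qC y z c\<bar> \<le> 1"
    using conditional_A conditional_B conditional_C by (simp_all add: abs_binary_conditional_le_1)
  ultimately show "\<bar>(\<lambda>(x, y, z). qA x y a * qB x z b * qC y z c) w\<bar> \<le> 1"
    by (simp add: abs_mult mult_le_one)
qed

lemma expect3_observed:
  "expect3 observed f =
     (\<integral>(x, y, z). expect3 (\<lambda>a b c. qA x y a * qB x z b * qC y z c) f \<partial>(MX \<Otimes>\<^sub>M (MY \<Otimes>\<^sub>M MZ)))"
  using integrable_source_product
  by (simp add: expect3_def triangle_distribution_def case_prod_beta' integral_sum integrable_sum)

definition mean_A :: "'y \<Rightarrow> real" where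
  "mean_A y = (\<integral>x. cond_mean qA x y \<partial>MX)"

definition mean_B :: "'z \<Rightarrow> real" where
  "mean_B z = (\<integral>x. cond_mean qB x z \<partial>MX)"

lemma measurable_cond_means [measurable]:
  "(\<lambda>(x, y). cond_mean qA x y) \<in> borel_measurable (MX \<Otimes>\<^sub>M MY)"
  "(\<lambda>(x, z). cond_mean qB x z) \<in> borel_measurable (MX \<Otimes>\<^sub>M MZ)"
  "(\<lambda>(y, z). cond_mean qC y z) \<in> borel_measurable (MY \<Otimes>\<^sub>M MZ)"
  using conditional_A conditional_B conditional_C by (simp_all add: measurable_cond_mean)

lemma measurable_means [measurable]:
  "mean_A \<in> borel_measurable MY" "mean_B \<in> borel_measurable MZ"
  unfolding mean_A_def mean_B_def by measurable

lemma abs_cond_means_le_1: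
  "x \<in> space MX \<Longrightarrow> y \<in> space MY \<Longrightarrow> \<bar>cond_mean qA x y\<bar> \<le> 1"
  "x \<in> space MX \<Longrightarrow> z \<in> space MZ \<Longrightarrow> \<bar>cond_mean qB x z\<bar> \<le> 1"
  "y \<in> space MY \<Longrightarrow> z \<in> space MZ \<Longrightarrow> \<bar>cond_mean qC y z\<bar> \<le> 1"
  using conditional_A conditional_B conditional_C by (simp_all add: abs_cond_mean_le_1)

lemma measurable_cond_means_X:
  "y \<in> space MY \<Longrightarrow> (\<lambda>x. cond_mean qA x y) \<in> borel_measurable MX"
  "z \<in> space MZ \<Longrightarrow> (\<lambda>x. cond_mean qB x z) \<in> borel_measurable MX"
  using measurable_Pair1[OF measurable_cond_means(1)] measurable_Pair1[OF measurable_cond_means(2)]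
  by simp_all

lemma integrable_cond_means_X:
  "y \<in> space MY \<Longrightarrow> integrable MX (\<lambda>x. cond_mean qA x y)"
  "z \<in> space MZ \<Longrightarrow> integrable MX (\<lambda>x. cond_mean qB x z)"
  by (auto intro!: X.integrable_abs_bounded measurable_cond_means_X abs_cond_means_le_1)

lemma abs_means_le_1:
  "y \<in> space MY \<Longrightarrow> \<bar>mean_A y\<bar> \<le> 1"
  "z \<in> space MZ \<Longrightarrow> \<bar>mean_B z\<bar> \<le> 1"
  unfolding mean_A_def mean_B_def
  by (auto intro!: X.abs_integral_le_bound measurable_cond_means_X abs_cond_means_le_1)

lemma expect3_sources:
  assumes "x \<in> space MX" "y \<in> space MY" "z \<in> space MZ"
  defines "P \<equiv> \<lambda>a b c. qA x y a * qB x z b * qC y z c"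
  shows "expect3 P (\<lambda>a b c. of_int (a * c)) = cond_mean qA x y * cond_mean qC y z"
    and "expect3 P (\<lambda>a b c. of_int (b * c)) = cond_mean qB x z * cond_mean qC y z"
    and "expect3 P (\<lambda>a b c. of_int a) = cond_mean qA x y"
    and "expect3 P (\<lambda>a b c. of_int b) = cond_mean qB x z"
  using expect3_product[of "qA x y" "qB x z" "qC y z"] assms
    binary_conditional_normalised[OF conditional_A] binary_conditional_normalised[OF conditional_B]
    binary_conditional_normalised[OF conditional_C]
  by (simp_all add: cond_mean_def)

lemma expect3_observed_cond_means:
  "expect3 observed (\<lambda>a b c. of_int (a * c)) =
     (\<integral>(x, y, z). cond_mean qA x y * cond_mean qC y z \<partial>(MX \<Otimes>\<^sub>M (MY \<Otimes>\<^sub>M MZ)))"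
  "expect3 observed (\<lambda>a b c. of_int (b * c)) =
     (\<integral>(x, y, z). cond_mean qB x z * cond_mean qC y z \<partial>(MX \<Otimes>\<^sub>M (MY \<Otimes>\<^sub>M MZ)))"
  "expect3 observed (\<lambda>a b c. of_int a) = (\<integral>(x, y, z). cond_mean qA x y \<partial>(MX \<Otimes>\<^sub>M (MY \<Otimes>\<^sub>M MZ)))"
  "expect3 observed (\<lambda>a b c. of_int b) = (\<integral>(x, y, z). cond_mean qB x z \<partial>(MX \<Otimes>\<^sub>M (MY \<Otimes>\<^sub>M MZ)))"
  unfolding expect3_observed
  by (auto intro!: Bochner_Integration.integral_cong simp: space_pair_measure expect3_sources simp del: of_int_mult)

lemma integrable_cond_mean_terms:
  "integrable (MX \<Otimes>\<^sub>M (MY \<Otimes>\<^sub>M MZ)) (\<lambda>(x, y, z). cond_mean qA x y * cond_mean qC y z)"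
  "integrable (MX \<Otimes>\<^sub>M (MY \<Otimes>\<^sub>M MZ)) (\<lambda>(x, y, z). cond_mean qB x z * cond_mean qC y z)"
  "integrable (MX \<Otimes>\<^sub>M (MY \<Otimes>\<^sub>M MZ)) (\<lambda>(x, y, z). cond_mean qA x y)"
  "integrable (MX \<Otimes>\<^sub>M (MY \<Otimes>\<^sub>M MZ)) (\<lambda>(x, y, z). cond_mean qB x z)"
  by (rule XYZ.integrable_abs_bounded[where B = 1], measurable,
      auto simp: space_pair_measure abs_mult abs_cond_means_le_1 intro!: mult_le_one)+

lemma expect3_AC_plus_BC:
  "expect3 observed (\<lambda>a b c. of_int (a * c)) + expect3 observed (\<lambda>a b c. of_int (b * c)) =
     (\<integral>(y, z). (mean_A y + mean_B z) * cond_mean qC y z \<partial>(MY \<Otimes>\<^sub>M MZ))"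
proof -
  have "expect3 observed (\<lambda>a b c. of_int (a * c)) + expect3 observed (\<lambda>a b c. of_int (b * c)) =
      (\<integral>(x, y, z). (cond_mean qA x y + cond_mean qB x z) * cond_mean qC y z
        \<partial>(MX \<Otimes>\<^sub>M (MY \<Otimes>\<^sub>M MZ)))"
    unfolding expect3_observed_cond_means
      Bochner_Integration.integral_add[OF integrable_cond_mean_terms(1,2), symmetric]
    by (simp add: case_prod_beta' distrib_right)
  also have "\<dots> = (\<integral>n. (\<integral>x. (case n of (y, z) \<Rightarrow>
      (cond_mean qA x y + cond_mean qB x z) * cond_mean qC y z) \<partial>MX) \<partial>(MY \<Otimes>\<^sub>M MZ))"
    using Bochner_Integration.integrable_add[OF integrable_cond_mean_terms(1,2)]
    by (intro XYZ.integral_snd[symmetric]) (simp add: case_prod_beta' distrib_right)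
  also have "\<dots> = (\<integral>(y, z). (mean_A y + mean_B z) * cond_mean qC y z \<partial>(MY \<Otimes>\<^sub>M MZ))"
    by (intro Bochner_Integration.integral_cong)
       (auto simp: space_pair_measure mean_A_def mean_B_def integrable_cond_means_X)
  finally show ?thesis .
qed

lemma expect3_A: "expect3 observed (\<lambda>a b c. of_int a) = integral\<^sup>L MY mean_A"
proof -
  have "expect3 observed (\<lambda>a b c. of_int a) = (\<integral>(y, z). mean_A y * 1 \<partial>(MY \<Otimes>\<^sub>M MZ))"
    unfolding expect3_observed_cond_means XYZ.integral_snd[OF integrable_cond_mean_terms(3), symmetric]
    by (simp add: mean_A_def case_prod_beta')
  also have "\<dots> = integral\<^sup>L MY mean_A"
    using abs_means_le_1
    by (subst YZ.integral_pair_product[where B = 1 and C = 1]) (auto simp: Y.prob_space Z.prob_space)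
  finally show ?thesis .
qed

lemma expect3_B: "expect3 observed (\<lambda>a b c. of_int b) = integral\<^sup>L MZ mean_B"
proof -
  have "expect3 observed (\<lambda>a b c. of_int b) = (\<integral>(y, z). 1 * mean_B z \<partial>(MY \<Otimes>\<^sub>M MZ))"
    unfolding expect3_observed_cond_means XYZ.integral_snd[OF integrable_cond_mean_terms(4), symmetric]
    by (simp add: mean_B_def case_prod_beta')
  also have "\<dots> = integral\<^sup>L MZ mean_B"
    using abs_means_le_1
    by (subst YZ.integral_pair_product[where B = 1 and C = 1]) (auto simp: Y.prob_space Z.prob_space)
  finally show ?thesis .
qed

theorem correlation_inequality:
  "expect3 observed (\<lambda>a b c. of_int (a * c)) + expect3 observed (\<lambda>a b c. of_int (b * c))
     \<le> 1 + expect3 observed (\<lambda>a b c. of_int a) * expect3 observed (\<lambda>a b c. of_int b)"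
proof -
  have bounded: "\<bar>mean_A y\<bar> \<le> 1" "\<bar>mean_B z\<bar> \<le> 1" "\<bar>cond_mean qC y z\<bar> \<le> 1"
    if "(y, z) \<in> space (MY \<Otimes>\<^sub>M MZ)" for y z
    using that abs_means_le_1 abs_cond_means_le_1 by (auto simp: space_pair_measure)
  have integrable_product: "integrable (MY \<Otimes>\<^sub>M MZ) (\<lambda>(y, z). mean_A y * mean_B z)"
  proof (rule YZ.integrable_abs_bounded[where B = 1])
    fix p assume "p \<in> space (MY \<Otimes>\<^sub>M MZ)"
    with bounded show "\<bar>(\<lambda>(y, z). mean_A y * mean_B z) p\<bar> \<le> 1"
      by (cases p) (simp add: abs_mult mult_le_one)
  qed measurable
  have "expect3 observed (\<lambda>a b c. of_int (a * c)) + expect3 observed (\<lambda>a b c. of_int (b * c)) =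
      (\<integral>(y, z). (mean_A y + mean_B z) * cond_mean qC y z \<partial>(MY \<Otimes>\<^sub>M MZ))"
    by (rule expect3_AC_plus_BC)
  also have "\<dots> \<le> (\<integral>(y, z). 1 + mean_A y * mean_B z \<partial>(MY \<Otimes>\<^sub>M MZ))"
  proof (rule integral_mono)
    show "integrable (MY \<Otimes>\<^sub>M MZ) (\<lambda>(y, z). (mean_A y + mean_B z) * cond_mean qC y z)"
    proof (rule YZ.integrable_abs_bounded[where B = 2])
      fix p assume "p \<in> space (MY \<Otimes>\<^sub>M MZ)"
      moreover obtain y z where "p = (y, z)" by (cases p)
      ultimately have "\<bar>mean_A y + mean_B z\<bar> \<le> 2" "\<bar>cond_mean qC y z\<bar> \<le> 1"
        using bounded[of y z] by auto
      then have "\<bar>mean_A y + mean_B z\<bar> * \<bar>cond_mean qC y z\<bar> \<le> 2 * 1"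
        by (intro mult_mono) simp_all
      then show "\<bar>(\<lambda>(y, z). (mean_A y + mean_B z) * cond_mean qC y z) p\<bar> \<le> 2"
        using \<open>p = (y, z)\<close> by (simp add: abs_mult)
    qed measurable
    show "integrable (MY \<Otimes>\<^sub>M MZ) (\<lambda>(y, z). 1 + mean_A y * mean_B z)"
      using integrable_product by (simp add: case_prod_beta')
    fix p assume "p \<in> space (MY \<Otimes>\<^sub>M MZ)"
    with bounded show "(\<lambda>(y, z). (mean_A y + mean_B z) * cond_mean qC y z) p
        \<le> (\<lambda>(y, z). 1 + mean_A y * mean_B z) p"
      by (cases p) (simp add: correlation_bound)
  qed
  also have "\<dots> = 1 + (\<integral>(y, z). mean_A y * mean_B z \<partial>(MY \<Otimes>\<^sub>M MZ))"
    using integrable_product by (simp add: case_prod_beta' YZ.prob_space)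
  also have "\<dots> = 1 + integral\<^sup>L MY mean_A * integral\<^sup>L MZ mean_B"
    using abs_means_le_1 by (subst YZ.integral_pair_product[where B = 1 and C = 1]) auto
  finally show ?thesis
    by (simp only: expect3_A expect3_B)
qed

end

theorem mainTheorem7:
  fixes MX :: "'x measure" and MY :: "'y measure" and MZ :: "'z measure"
    and qA :: "'x \<Rightarrow> 'y \<Rightarrow> int \<Rightarrow> real"
    and qB :: "'x \<Rightarrow> 'z \<Rightarrow> int \<Rightarrow> real"
    and qC :: "'y \<Rightarrow> 'z \<Rightarrow> int \<Rightarrow> real"
    and P :: "int \<Rightarrow> int \<Rightarrow> int \<Rightarrow> real"
  assumes "prob_space MX" and "prob_space MY" and "prob_space MZ"
    and "binary_conditional MX MY qA"
    and "binary_conditional MX MZ qB"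
    and "binary_conditional MY MZ qC"
    and "P = triangle_distribution MX MY MZ qA qB qC"
  shows "expect3 P (\<lambda>a b c. real_of_int (a * c)) + expect3 P (\<lambda>a b c. real_of_int (b * c))
           \<le> 1 + expect3 P (\<lambda>a b c. real_of_int a) * expect3 P (\<lambda>a b c. real_of_int b)"
proof -
  interpret triangle_network MX MY MZ qA qB qC
    using assms(1-6) by (simp add: triangle_network_def triangle_network_axioms_def)
  show ?thesis
    unfolding assms(7) by (rule correlation_inequality)
qed

end
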